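(* Let $p_{0,0},p_{1,0}\in[0,1]$ with $p_{0,0}>p_{1,0}$ (positively correlated arm), $0\le\rho_0<\rho_1\le1$, and $K\ge1$ an integer. Then the belief updates $\gamma_0,\gamma_1,\gamma_2$ defined in the context are increasing in $\pi\in[0,1]$; moreover $\gamma_1$ is convex and $\gamma_0$ is concave, and $p_{1,0}\le\gamma_1(\pi)\le\gamma_0(\pi)\le p_{0,0}$ for all $\pi\in[0,1]$.
   Context: For $\pi\in[0,1]$ define $\gamma_1(\pi)=\frac{(1-\pi)\rho_1p_{1,0}+\pi\rho_0p_{0,0}}{\rho_1(1-\pi)+\rho_0\pi}$, $\gamma_0(\pi)=\frac{(1-\pi)(1-\rho_1)p_{1,0}+\pi(1-\rho_0)p_{0,0}}{(1-\rho_1)(1-\pi)+(1-\rho_0)\pi}$, $\gamma_2(\pi)=(p_{0,0}-p_{1,0})^K\pi+p_{1,0}\sum_{j=0}^{K-1}(p_{0,0}-p_{1,0})^j$. (These are the posterior probabilities of hidden state $0$ of a two-state Markov chain with transition probabilities $p_{i,0}$ from state $i$ to $0$, after respectively an ACK, a NACK, or no play; $\rho_i$ is the ACK probability in state $i$.) *)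

theory Defs
  imports "HOL-Analysis.Analysis"
begin

text \<open>Posterior probability of hidden state 0 after an ACK.\<close>
definition gamma1 :: "real \<Rightarrow> real \<Rightarrow> real \<Rightarrow> real \<Rightarrow> real \<Rightarrow> real" where
  "gamma1 p00 p10 \<rho>0 \<rho>1 \<pi> =
     ((1 - \<pi>) * \<rho>1 * p10 + \<pi> * \<rho>0 * p00) / (\<rho>1 * (1 - \<pi>) + \<rho>0 * \<pi>)"

text \<open>Posterior probability of hidden state 0 after a NACK.\<close>
definition gamma0 :: "real \<Rightarrow> real \<Rightarrow> real \<Rightarrow> real \<Rightarrow> real \<Rightarrow> real" where
  "gamma0 p00 p10 \<rho>0 \<rho>1 \<pi> =
     ((1 - \<pi>) * (1 - \<rho>1) * p10 + \<pi> * (1 - \<rho>0) * p00) /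
     ((1 - \<rho>1) * (1 - \<pi>) + (1 - \<rho>0) * \<pi>)"

text \<open>Belief after K steps without play.\<close>
definition gamma2 :: "real \<Rightarrow> real \<Rightarrow> nat \<Rightarrow> real \<Rightarrow> real" where
  "gamma2 p00 p10 K \<pi> =
     (p00 - p10) ^ K * \<pi> + p10 * (\<Sum>j<K. (p00 - p10) ^ j)"

text \<open>Sets of beliefs in [0,1] on which the posteriors are well defined
  (denominator = probability of the observation is nonzero).\<close>
definition dom1 :: "real \<Rightarrow> real \<Rightarrow> real set" where
  "dom1 \<rho>0 \<rho>1 = {\<pi> \<in> {0..1}. \<rho>1 * (1 - \<pi>) + \<rho>0 * \<pi> \<noteq> 0}"

definition dom0 :: "real \<Rightarrow> real \<Rightarrow> real set" where
  "dom0 \<rho>0 \<rho>1 = {\<pi> \<in> {0..1}. (1 - \<rho>1) * (1 - \<pi>) + (1 - \<rho>0) * \<pi> \<noteq> 0}"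

end

theory Submission
  imports Defs
begin

text \<open>Both \<open>\<gamma>\<^sub>1\<close> and \<open>\<gamma>\<^sub>0\<close> are Bayes posteriors
  \<open>x \<mapsto> (a(1-x)u + bxv) / (a(1-x) + bx)\<close>, where \<open>a, b\<close> are the likelihoods of the
  observation in states 1 and 0 and \<open>u \<le> v\<close> the one-step probabilities of moving to state 0.
  Such a map has derivative \<open>ab(v-u)/D\<^sup>2\<close> and second derivative \<open>2ab(v-u)(a-b)/D\<^sup>3\<close>
  with \<open>D = a(1-x) + bx > 0\<close>, so it is increasing, convex if \<open>b \<le> a\<close> (ACK: \<open>\<rho>\<^sub>0 < \<rho>\<^sub>1\<close>)
  and concave if \<open>a \<le> b\<close> (NACK). It lies between \<open>u\<close> and \<open>v\<close>, and it grows with the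
  likelihood ratio \<open>b/a\<close>, which orders the ACK posterior below the NACK posterior.
  Finally \<open>\<gamma>\<^sub>2\<close> is affine with nonnegative slope \<open>(p\<^sub>0\<^sub>0 - p\<^sub>1\<^sub>0)\<^sup>K\<close>.\<close>

definition evidence :: "real \<Rightarrow> real \<Rightarrow> real \<Rightarrow> real" where
  "evidence a b x = a * (1 - x) + b * x"

definition posterior :: "real \<Rightarrow> real \<Rightarrow> real \<Rightarrow> real \<Rightarrow> real \<Rightarrow> real" where
  "posterior a b u v x = ((1 - x) * a * u + x * b * v) / evidence a b x"

definition posterior_dom :: "real \<Rightarrow> real \<Rightarrow> real set" where
  "posterior_dom a b = {x \<in> {0..1}. evidence a b x \<noteq> 0}"

lemma evidence_pos:
  assumes "0 \<le> a" "0 \<le> b" "x \<in> posterior_dom a b"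
  shows "evidence a b x > 0"
proof -
  have "evidence a b x \<ge> 0"
    using assms unfolding posterior_dom_def evidence_def by auto
  then show ?thesis using assms(3) unfolding posterior_dom_def by auto
qed

lemma evidence_convex_combination:
  assumes "s + t = 1"
  shows "evidence a b (s * x + t * y) = s * evidence a b x + t * evidence a b y"
proof -
  have "a = a * (s + t)" "b = b * (s + t)" using assms by simp_all
  then show ?thesis unfolding evidence_def by (simp add: algebra_simps)
qed

lemma convex_posterior_dom:
  assumes "0 \<le> a" "0 \<le> b"
  shows "convex (posterior_dom a b)"
proof (rule convexI)
  fix x y s t :: real
  assume x: "x \<in> posterior_dom a b" and y: "y \<in> posterior_dom a b"
    and st: "0 \<le> s" "0 \<le> t" "s + t = 1"
  have "s * evidence a b x + t * evidence a b y > 0"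
    using st evidence_pos[OF assms x] evidence_pos[OF assms y]
    by (cases "s = 0") (auto intro: add_pos_nonneg)
  moreover have "s * x + t * y \<le> s * 1 + t * 1"
    using x y st unfolding posterior_dom_def by (intro add_mono mult_left_mono) auto
  ultimately show "s *\<^sub>R x + t *\<^sub>R y \<in> posterior_dom a b"
    using x y st evidence_convex_combination[OF st(3)]
    unfolding posterior_dom_def by auto
qed

lemma posterior_diff:
  assumes "evidence a b x \<noteq> 0" "evidence a b y \<noteq> 0"
  shows "posterior a b u v y - posterior a b u v x
       = a * b * (v - u) * (y - x) / (evidence a b x * evidence a b y)"
  using assms unfolding posterior_def evidence_def by (simp add: field_simps)

lemma posterior_minus_lower:
  assumes "evidence a b x \<noteq> 0"
  shows "posterior a b u v x - u = b * x * (v - u) / evidence a b x"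
  using assms unfolding posterior_def evidence_def by (simp add: field_simps)

lemma upper_minus_posterior:
  assumes "evidence a b x \<noteq> 0"
  shows "v - posterior a b u v x = a * (1 - x) * (v - u) / evidence a b x"
  using assms unfolding posterior_def evidence_def by (simp add: field_simps)

lemma has_real_derivative_posterior:
  assumes "evidence a b x \<noteq> 0"
  shows "(posterior a b u v has_real_derivative a * b * (v - u) / (evidence a b x)\<^sup>2) (at x)"
  unfolding posterior_def[abs_def] using assms unfolding evidence_def
  by (auto intro!: derivative_eq_intros simp: field_simps power2_eq_square)

lemma has_real_derivative_posterior_deriv:
  assumes "evidence a b x \<noteq> 0"
  shows "((\<lambda>x. a * b * (v - u) / (evidence a b x)\<^sup>2) has_real_derivative
           2 * (a * b * (v - u)) * (a - b) / (evidence a b x) ^ 3) (at x)"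
proof -
  have "((\<lambda>x. a * b * (v - u) / (evidence a b x)\<^sup>2) has_real_derivative
     - (a * b * (v - u) * (of_nat 2 * (evidence a b x) ^ (2 - 1) * (b - a)))
       / ((evidence a b x)\<^sup>2 * (evidence a b x)\<^sup>2)) (at x)"
    using assms unfolding evidence_def by (intro derivative_eq_intros refl) auto
  moreover have "- (a * b * (v - u) * (of_nat 2 * (evidence a b x) ^ (2 - 1) * (b - a)))
       / ((evidence a b x)\<^sup>2 * (evidence a b x)\<^sup>2)
     = 2 * (a * b * (v - u)) * (a - b) / (evidence a b x) ^ 3"
    using assms by (simp add: field_simps power2_eq_square power3_eq_cube)
  ultimately show ?thesis by simp
qed

lemma mono_on_posterior:
  assumes "0 \<le> a" "0 \<le> b" "u \<le> v"
  shows "mono_on (posterior_dom a b) (posterior a b u v)"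
proof (rule mono_onI)
  fix x y assume x: "x \<in> posterior_dom a b" and y: "y \<in> posterior_dom a b" and "x \<le> y"
  with assms evidence_pos[OF assms(1,2)]
  have "a * b * (v - u) * (y - x) / (evidence a b x * evidence a b y) \<ge> 0"
    by (intro divide_nonneg_pos mult_nonneg_nonneg) auto
  with posterior_diff[of a b x y u v] x y show "posterior a b u v x \<le> posterior a b u v y"
    unfolding posterior_dom_def by simp
qed

lemma convex_on_posterior:
  assumes "0 \<le> b" "b \<le> a" "u \<le> v"
  shows "convex_on (posterior_dom a b) (posterior a b u v)"
proof (rule f''_ge0_imp_convex[OF convex_posterior_dom])
  fix x assume x: "x \<in> posterior_dom a b"
  then have D: "evidence a b x > 0" using evidence_pos assms by force
  then show "(posterior a b u v has_real_derivative a * b * (v - u) / (evidence a b x)\<^sup>2) (at x)"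
    and "((\<lambda>x. a * b * (v - u) / (evidence a b x)\<^sup>2) has_real_derivative
           2 * (a * b * (v - u)) * (a - b) / (evidence a b x) ^ 3) (at x)"
    by (simp_all add: has_real_derivative_posterior has_real_derivative_posterior_deriv)
  show "0 \<le> 2 * (a * b * (v - u)) * (a - b) / (evidence a b x) ^ 3"
    using D assms by (intro divide_nonneg_pos mult_nonneg_nonneg) auto
qed (use assms in auto)

lemma concave_on_posterior:
  assumes "0 \<le> a" "a \<le> b" "u \<le> v"
  shows "concave_on (posterior_dom a b) (posterior a b u v)"
proof (rule f''_le0_imp_concave[OF convex_posterior_dom])
  fix x assume x: "x \<in> posterior_dom a b"
  then have D: "evidence a b x > 0" using evidence_pos assms by force
  then show "(posterior a b u v has_real_derivative a * b * (v - u) / (evidence a b x)\<^sup>2) (at x)"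
    and "((\<lambda>x. a * b * (v - u) / (evidence a b x)\<^sup>2) has_real_derivative
           2 * (a * b * (v - u)) * (a - b) / (evidence a b x) ^ 3) (at x)"
    by (simp_all add: has_real_derivative_posterior has_real_derivative_posterior_deriv)
  have "0 \<le> 2 * (a * b * (v - u)) * (b - a) / (evidence a b x) ^ 3"
    using D assms by (intro divide_nonneg_pos mult_nonneg_nonneg) auto
  then show "2 * (a * b * (v - u)) * (a - b) / (evidence a b x) ^ 3 \<le> 0"
    by (simp add: divide_simps algebra_simps split: if_splits)
qed (use assms in auto)

lemma posterior_bounds:
  assumes "0 \<le> a" "0 \<le> b" "u \<le> v" "x \<in> posterior_dom a b"
  shows "u \<le> posterior a b u v x \<and> posterior a b u v x \<le> v"
proof -
  have D: "evidence a b x > 0" using evidence_pos assms by blast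
  have "0 \<le> x" "x \<le> 1" using assms(4) unfolding posterior_dom_def by auto
  then have "b * x * (v - u) / evidence a b x \<ge> 0" "a * (1 - x) * (v - u) / evidence a b x \<ge> 0"
    using D assms by (auto intro!: divide_nonneg_pos mult_nonneg_nonneg)
  then show ?thesis
    using posterior_minus_lower[of a b x u v] upper_minus_posterior[of a b x v u] D by force
qed

lemma posterior_mono_likelihood_ratio:
  assumes "b * a' \<le> b' * a" "u \<le> v" "x \<in> {0..1}"
    and D: "evidence a b x > 0" "evidence a' b' x > 0"
  shows "posterior a b u v x \<le> posterior a' b' u v x"
proof -
  have x01: "0 \<le> x" "x \<le> 1" using assms(3) by auto
  have "b' * evidence a b x - b * evidence a' b' x = (b' * a - b * a') * (1 - x)"
    unfolding evidence_def by (simp add: algebra_simps)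
  also have "\<dots> \<ge> 0" using assms x01 by simp
  finally have "b / evidence a b x \<le> b' / evidence a' b' x"
    using D by (simp add: divide_simps mult.commute)
  then have "b / evidence a b x * (x * (v - u)) \<le> b' / evidence a' b' x * (x * (v - u))"
    using assms x01 by (intro mult_right_mono) auto
  then show ?thesis
    using posterior_minus_lower[of a b x u v] posterior_minus_lower[of a' b' x u v] D
    by (simp add: mult.commute mult.left_commute)
qed

theorem lemma2:
  fixes p00 p10 \<rho>0 \<rho>1 :: real and K :: nat
  assumes "0 \<le> p10" "p10 < p00" "p00 \<le> 1"
    and "0 \<le> \<rho>0" "\<rho>0 < \<rho>1" "\<rho>1 \<le> 1"
    and "K \<ge> 1"
  shows "mono_on (dom1 \<rho>0 \<rho>1) (gamma1 p00 p10 \<rho>0 \<rho>1)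
       \<and> mono_on (dom0 \<rho>0 \<rho>1) (gamma0 p00 p10 \<rho>0 \<rho>1)
       \<and> mono_on {0..1} (gamma2 p00 p10 K)
       \<and> convex_on (dom1 \<rho>0 \<rho>1) (gamma1 p00 p10 \<rho>0 \<rho>1)
       \<and> concave_on (dom0 \<rho>0 \<rho>1) (gamma0 p00 p10 \<rho>0 \<rho>1)
       \<and> (\<forall>\<pi> \<in> dom1 \<rho>0 \<rho>1 \<inter> dom0 \<rho>0 \<rho>1.
            p10 \<le> gamma1 p00 p10 \<rho>0 \<rho>1 \<pi>
          \<and> gamma1 p00 p10 \<rho>0 \<rho>1 \<pi> \<le> gamma0 p00 p10 \<rho>0 \<rho>1 \<pi>
          \<and> gamma0 p00 p10 \<rho>0 \<rho>1 \<pi> \<le> p00)"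
proof -
  have gamma1_eq: "gamma1 p00 p10 \<rho>0 \<rho>1 = posterior \<rho>1 \<rho>0 p10 p00"
    and gamma0_eq: "gamma0 p00 p10 \<rho>0 \<rho>1 = posterior (1 - \<rho>1) (1 - \<rho>0) p10 p00"
    and dom1_eq: "dom1 \<rho>0 \<rho>1 = posterior_dom \<rho>1 \<rho>0"
    and dom0_eq: "dom0 \<rho>0 \<rho>1 = posterior_dom (1 - \<rho>1) (1 - \<rho>0)"
    by (auto simp: gamma1_def gamma0_def dom1_def dom0_def posterior_def posterior_dom_def
        evidence_def)
  have "mono_on {0..1} (gamma2 p00 p10 K)"
    using assms by (intro mono_onI) (simp add: gamma2_def mult_left_mono)
  moreover have "posterior \<rho>1 \<rho>0 p10 p00 x \<le> posterior (1 - \<rho>1) (1 - \<rho>0) p10 p00 x"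
    if "x \<in> posterior_dom \<rho>1 \<rho>0" "x \<in> posterior_dom (1 - \<rho>1) (1 - \<rho>0)" for x
    using that assms
    by (intro posterior_mono_likelihood_ratio evidence_pos)
      (auto simp: algebra_simps posterior_dom_def)
  moreover have "p10 \<le> posterior \<rho>1 \<rho>0 p10 p00 x" if "x \<in> posterior_dom \<rho>1 \<rho>0" for x
    using posterior_bounds[OF _ _ _ that] assms by simp
  moreover have "posterior (1 - \<rho>1) (1 - \<rho>0) p10 p00 x \<le> p00"
    if "x \<in> posterior_dom (1 - \<rho>1) (1 - \<rho>0)" for x
    using posterior_bounds[OF _ _ _ that] assms by simp
  ultimately show ?thesis
    unfolding gamma1_eq gamma0_eq dom1_eq dom0_eq using assms
    by (auto intro!: mono_on_posterior convex_on_posterior concave_on_posterior)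
qed

end
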